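(* For every integer $m\ge2$ and every $\alpha\in[0,1]$, every deterministic Condorcet consistent social choice rule on $m$ candidates has distortion at least $3-\frac{4(3+\alpha)}{m+2+m\alpha}$ on $\alpha$-decisive metric spaces. The same lower bound applies to selecting an arbitrary candidate from the matching uncovered set.
   Context: An election: voters $V=\{1,\dots,n\}$, a fixed finite set $C$ of $m$ candidates, a profile of linear orders $\sigma_i$ over $C$; $a\succeq_i c$ means $a=c$ or $i$ ranks $a$ above $c$; $\mathrm{top}(i)$ is $i$'s first choice. A distance function $d$ on $V\cup C$ is nonnegative, symmetric and satisfies the triangle inequality (co-location allowed); consistent with $\sigma$ if $d(i,c)\le d(i,c')$ whenever $i$ ranks $c$ above $c'$; $\alpha$-decisive if $d(i,\mathrm{top}(i))\le\alpha\,d(i,c)$ for all $i$ and $c\ne\mathrm{top}(i)$. $\mathrm{SC}(c)=\sum_i d(i,c)$. Distortion of a deterministic rule $f$ on $\alpha$-decisive spaces: $\sup_\sigma\sup_d\mathrm{SC}(f(\sigma))/\min_c\mathrm{SC}(c)$ over $\alpha$-decisive consistent $d$ (for "selecting an arbitrary candidate from a set", the worst choice in the set is taken). A Condorcet winner is a candidate $a$ such that for every other candidate $b$, at least $n/2$ voters prefer $a$ to $b$; a deterministic rule is Condorcet consistent if it outputs a Condorcet winner whenever one exists. The separation graph $G(a,b)$ has both sides copies of $V$ and edge $(i,j)$ iff some $c$ satisfies $a\succeq_i c$ and $c\succeq_j b$; the matching uncovered set is the set of $a$ such that $G(a,b)$ has a perfect matching for all $b$. *)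

theory Defs
  imports Complex_Main "HOL-Library.Extended_Real"
begin

text \<open>A profile is a list of rankings;
voter i (for i < length P) has ranking P ! i, a list of all candidates
without repetition, most preferred first.  Points of the metric space are
Inl i (voter i) and Inr c (candidate c).\<close>

definition ranking :: "'c::finite list \<Rightarrow> bool" where
  "ranking r \<longleftrightarrow> distinct r \<and> set r = UNIV"

definition profile :: "'c::finite list list \<Rightarrow> bool" where
  "profile P \<longleftrightarrow> (\<forall>r \<in> set P. ranking r)"

definition voters :: "'c list list \<Rightarrow> nat set" where
  "voters P = {..<length P}"

definition prefers :: "'c list list \<Rightarrow> nat \<Rightarrow> 'c \<Rightarrow> 'c \<Rightarrow> bool" where
  "prefers P i a b \<longleftrightarrow> (\<exists>xs ys. P ! i = xs @ a # ys \<and> b \<in> set ys)"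

definition weakly_prefers :: "'c list list \<Rightarrow> nat \<Rightarrow> 'c \<Rightarrow> 'c \<Rightarrow> bool" where
  "weakly_prefers P i a b \<longleftrightarrow> a = b \<or> prefers P i a b"

definition top :: "'c list list \<Rightarrow> nat \<Rightarrow> 'c" where
  "top P i = hd (P ! i)"

definition distance_function :: "'c list list \<Rightarrow> (nat + 'c \<Rightarrow> nat + 'c \<Rightarrow> real) \<Rightarrow> bool" where
  "distance_function P d \<longleftrightarrow>
     (let Pts = Inl ` voters P \<union> range Inr in
       (\<forall>x\<in>Pts. d x x = 0) \<and>
       (\<forall>x\<in>Pts. \<forall>y\<in>Pts. 0 \<le> d x y \<and> d x y = d y x) \<and>
       (\<forall>x\<in>Pts. \<forall>y\<in>Pts. \<forall>z\<in>Pts. d x z \<le> d x y + d y z))"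

definition consistent :: "'c list list \<Rightarrow> (nat + 'c \<Rightarrow> nat + 'c \<Rightarrow> real) \<Rightarrow> bool" where
  "consistent P d \<longleftrightarrow>
     (\<forall>i\<in>voters P. \<forall>c c'. prefers P i c c' \<longrightarrow> d (Inl i) (Inr c) \<le> d (Inl i) (Inr c'))"

definition decisive :: "real \<Rightarrow> 'c list list \<Rightarrow> (nat + 'c \<Rightarrow> nat + 'c \<Rightarrow> real) \<Rightarrow> bool" where
  "decisive \<alpha> P d \<longleftrightarrow>
     (\<forall>i\<in>voters P. \<forall>c. c \<noteq> top P i \<longrightarrow>
        d (Inl i) (Inr (top P i)) \<le> \<alpha> * d (Inl i) (Inr c))"

definition SC :: "'c list list \<Rightarrow> (nat + 'c \<Rightarrow> nat + 'c \<Rightarrow> real) \<Rightarrow> 'c \<Rightarrow> real" where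
  "SC P d c = (\<Sum>i\<in>voters P. d (Inl i) (Inr c))"

definition opt_SC :: "'c::finite list list \<Rightarrow> (nat + 'c \<Rightarrow> nat + 'c \<Rightarrow> real) \<Rightarrow> real" where
  "opt_SC P d = Min (range (SC P d))"

text \<open>Instances with optimal social
  cost 0 are excluded (a lower bound on this quantity is only stronger).\<close>
definition distortion :: "real \<Rightarrow> ('c::finite list list \<Rightarrow> 'c set) \<Rightarrow> ereal" where
  "distortion \<alpha> S = Sup {ereal (SC P d c / opt_SC P d) | P d c.
      profile P \<and> distance_function P d \<and> consistent P d \<and> decisive \<alpha> P d \<and>
      opt_SC P d > 0 \<and> c \<in> S P}"

definition condorcet_winner :: "'c list list \<Rightarrow> 'c \<Rightarrow> bool" where
  "condorcet_winner P a \<longleftrightarrow>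
     (\<forall>b. b \<noteq> a \<longrightarrow> real (card {i\<in>voters P. prefers P i a b}) \<ge> real (length P) / 2)"

definition condorcet_consistent :: "('c::finite list list \<Rightarrow> 'c) \<Rightarrow> bool" where
  "condorcet_consistent f \<longleftrightarrow>
     (\<forall>P. profile P \<and> (\<exists>a. condorcet_winner P a) \<longrightarrow> condorcet_winner P (f P))"

definition sep_edge :: "'c list list \<Rightarrow> 'c \<Rightarrow> 'c \<Rightarrow> nat \<Rightarrow> nat \<Rightarrow> bool" where
  "sep_edge P a b i j \<longleftrightarrow> (\<exists>c. weakly_prefers P i a c \<and> weakly_prefers P j c b)"

definition has_perfect_matching :: "'c list list \<Rightarrow> 'c \<Rightarrow> 'c \<Rightarrow> bool" where
  "has_perfect_matching P a b \<longleftrightarrow>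
     (\<exists>\<pi>. bij_betw \<pi> (voters P) (voters P) \<and> (\<forall>i\<in>voters P. sep_edge P a b i (\<pi> i)))"

definition matching_uncovered_set :: "'c list list \<Rightarrow> 'c set" where
  "matching_uncovered_set P = {a. \<forall>b. has_perfect_matching P a b}"

end

theory Submission
  imports Defs
begin

(* A Condorcet consistent rule selects the Condorcet winner, and the matching uncovered set
   contains it, so it suffices to exhibit profiles all of whose Condorcet winners are expensive.

   For m >= 5 write the candidates as w, x, c_1, ..., c_k with k = m - 2.  Voter i ranks c_i, w, x
   on top (i = 1..k) and k - 2 further voters rank x first and w last; w is the unique Condorcet
   winner.  Put every voter on its top candidate and let two distinct candidates be at distance 2
   if both or neither lie in {w, x}, and at distance 1 otherwise.  This metric is consistent and
   alpha-decisive for every alpha, since each voter is at distance 0 from its top, and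
   SC(w) = 3k - 4 while SC(x) = k.

   For m <= 4 the rankings w x ... and x w ... make both w and x Condorcet winners.  On the real
   line with w at 0, x at 1 + alpha and the two voters at alpha and 1 + alpha, w costs 1 + 2 alpha
   times as much as x (and symmetrically for x).

   Both ratios dominate 3 - 4 (3 + alpha) / (m + 2 + m alpha). *)

lemma map_eq_replicate_if_const:
  "(\<And>y. y \<in> set xs \<Longrightarrow> f y = a) \<Longrightarrow> map f xs = replicate (length xs) a"
  by (induction xs) auto

lemma enumerate_finite_UNIV:
  fixes m :: nat
  assumes "card (UNIV :: 'c set) = m" and "2 \<le> m"
  obtains w x :: "'c::finite" and os where "distinct (w # x # os)" and "set (w # x # os) = UNIV"
    and "length os = m - 2"
proof -
  obtain cs :: "'c list" where cs: "distinct cs" "set cs = UNIV"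
    using finite_distinct_list[OF finite_UNIV] by blast
  then have "length cs = m"
    using assms(1) distinct_card by fastforce
  then obtain w x os where "cs = w # x # os"
    using assms(2) by (metis Suc_le_length_iff numeral_2_eq_2)
  then show ?thesis
    using that cs \<open>length cs = m\<close> by auto
qed

fun ranks_above :: "'c list \<Rightarrow> 'c \<Rightarrow> 'c \<Rightarrow> bool" where
  "ranks_above [] a b \<longleftrightarrow> False"
| "ranks_above (c # r) a b \<longleftrightarrow> (c = a \<and> b \<in> set r) \<or> ranks_above r a b"

lemma ranks_above_iff: "ranks_above r a b \<longleftrightarrow> (\<exists>xs ys. r = xs @ a # ys \<and> b \<in> set ys)"
  by (induction r) (auto simp: Cons_eq_append_conv)

lemma prefers_iff_ranks_above: "prefers P i a b \<longleftrightarrow> ranks_above (P ! i) a b"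
  by (simp add: prefers_def ranks_above_iff)

lemma ranks_above_in_set: "ranks_above r a b \<Longrightarrow> a \<in> set r \<and> b \<in> set r"
  by (induction r) auto

lemma ranks_above_sorted_le: "sorted (map g r) \<Longrightarrow> ranks_above r a b \<Longrightarrow> g a \<le> g b"
  by (induction r) auto

lemma card_prefers_eq_length_filter:
  "card {i \<in> voters P. prefers P i a b} = length (filter (\<lambda>r. ranks_above r a b) P)"
  by (simp add: length_filter_conv_card voters_def prefers_iff_ranks_above)

lemma condorcet_winner_iff_length_filter:
  "condorcet_winner P a \<longleftrightarrow>
     (\<forall>b. b \<noteq> a \<longrightarrow> real (length P) \<le> 2 * real (length (filter (\<lambda>r. ranks_above r a b) P)))"
  by (auto simp: condorcet_winner_def card_prefers_eq_length_filter)

lemma distance_function_pullback: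
  fixes \<delta> :: "'a \<Rightarrow> 'a \<Rightarrow> real"
  assumes "\<And>p. \<delta> p p = 0" and "\<And>p q. \<delta> p q = \<delta> q p" and "\<And>p q s. \<delta> p s \<le> \<delta> p q + \<delta> q s"
  shows "distance_function P (\<lambda>u v. \<delta> (f u) (f v))"
proof -
  have "0 \<le> \<delta> p q" for p q
    using assms(3)[of p p q] assms(1)[of p] assms(2)[of q p] by linarith
  then show ?thesis
    unfolding distance_function_def Let_def using assms by blast
qed

lemma triangle_if_distances_in_1_2:
  fixes \<delta> :: "'a \<Rightarrow> 'a \<Rightarrow> real"
  assumes "\<And>p. \<delta> p p = 0" and "\<And>p q. p \<noteq> q \<Longrightarrow> 1 \<le> \<delta> p q \<and> \<delta> p q \<le> 2"
  shows "\<delta> p s \<le> \<delta> p q + \<delta> q s"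
  using assms(2)[of p q] assms(2)[of q s] assms(2)[of p s] assms(1)
  by (cases "p = q"; cases "q = s"; cases "p = s") auto

context
  fixes P :: "'c list list" and d :: "nat + 'c \<Rightarrow> nat + 'c \<Rightarrow> real" and g :: "'c list \<Rightarrow> 'c \<Rightarrow> real"
  assumes voter_cost: "\<And>i c. i < length P \<Longrightarrow> d (Inl i) (Inr c) = g (P ! i) c"
begin

lemma SC_eq_sum_list: "SC P d c = (\<Sum>r\<leftarrow>P. g r c)"
  by (simp add: SC_def voters_def sum_list_sum_nth atLeast0LessThan voter_cost)

lemma consistent_if_sorted:
  assumes "\<And>r. r \<in> set P \<Longrightarrow> sorted (map (g r) r)"
  shows "consistent P d"
  unfolding consistent_def voters_def prefers_iff_ranks_above
proof (intro ballI allI impI)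
  fix i c c' assume "i \<in> {..<length P}" and "ranks_above (P ! i) c c'"
  then show "d (Inl i) (Inr c) \<le> d (Inl i) (Inr c')"
    using ranks_above_sorted_le[OF assms[OF nth_mem]] by (simp add: voter_cost)
qed

lemma decisive_if_top_close:
  assumes "\<And>r c. r \<in> set P \<Longrightarrow> c \<noteq> hd r \<Longrightarrow> g r (hd r) \<le> \<alpha> * g r c"
  shows "decisive \<alpha> P d"
  unfolding decisive_def voters_def top_def using assms by (simp add: voter_cost)

end

lemma opt_SC_le: "opt_SC P d \<le> SC P d c"
  unfolding opt_SC_def by (rule Min_le) auto

lemma opt_SC_pos: "(\<And>c. 0 < SC P d c) \<Longrightarrow> 0 < opt_SC P d"
  unfolding opt_SC_def by (subst Min_gr_iff) auto

definition costly :: "real \<Rightarrow> real \<Rightarrow> 'c::finite list list \<Rightarrow> 'c \<Rightarrow> bool" where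
  "costly \<alpha> B P w \<longleftrightarrow> (\<exists>d. distance_function P d \<and> consistent P d \<and> decisive \<alpha> P d \<and>
     0 < opt_SC P d \<and> B \<le> SC P d w / opt_SC P d)"

lemma costlyI:
  assumes "distance_function P d" "consistent P d" "decisive \<alpha> P d"
    and "\<And>c. 0 < SC P d c" and "B \<le> SC P d w / SC P d x"
  shows "costly \<alpha> B P w"
proof -
  have "SC P d w / SC P d x \<le> SC P d w / opt_SC P d"
    using assms(4)[of w] assms(4)[of x] opt_SC_pos[OF assms(4)] opt_SC_le
    by (intro divide_left_mono) auto
  then show ?thesis
    unfolding costly_def using assms opt_SC_pos[OF assms(4)] by force
qed

lemma costly_mono: "costly \<alpha> B P w \<Longrightarrow> B' \<le> B \<Longrightarrow> costly \<alpha> B' P w"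
  unfolding costly_def by force

lemma distortion_ge_if_costly:
  assumes "profile P" and "costly \<alpha> B P w" and "w \<in> S P"
  shows "ereal B \<le> distortion \<alpha> S"
proof -
  obtain d where d: "distance_function P d" "consistent P d" "decisive \<alpha> P d"
      "0 < opt_SC P d" and B: "B \<le> SC P d w / opt_SC P d"
    using assms(2) unfolding costly_def by blast
  have "ereal (SC P d w / opt_SC P d) \<le> distortion \<alpha> S"
    unfolding distortion_def by (rule Sup_upper) (use assms(1,3) d in blast)
  then show ?thesis
    using B order.trans ereal_less_eq(3) by blast
qed

lemma exists_permutation_moving_complement_into:
  assumes "finite V" and "A \<subseteq> V" and "card (V - A) \<le> card A"
  shows "\<exists>\<pi>. bij_betw \<pi> V V \<and> (\<forall>i\<in>V - A. \<pi> i \<in> A)"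
proof -
  obtain A' where A': "A' \<subseteq> A" "card A' = card (V - A)"
    using assms(3) obtain_subset_with_card_n by metis
  then obtain h where h: "bij_betw h (V - A) A'"
    using assms(1,2) finite_same_card_bij by (metis finite_Diff finite_subset)
  define \<pi> where
    "\<pi> i = (if i \<in> V - A then h i else if i \<in> A' then inv_into (V - A) h i else i)" for i
  have "\<pi> (\<pi> i) = i" if "i \<in> V" for i
    using h A' by (auto simp: \<pi>_def bij_betw_def)
  moreover have "\<pi> ` V \<subseteq> V" "\<pi> ` (V - A) \<subseteq> A"
    using h A' assms(2) by (auto simp: \<pi>_def bij_betw_def inv_into_into)
  ultimately show ?thesis
    using bij_betw_byWitness[of V \<pi> \<pi> V] by blast
qed

lemma condorcet_winner_in_matching_uncovered_set:
  assumes "condorcet_winner P a"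
  shows "a \<in> matching_uncovered_set P"
  unfolding matching_uncovered_set_def has_perfect_matching_def
proof (intro CollectI allI)
  fix b
  show "\<exists>\<pi>. bij_betw \<pi> (voters P) (voters P) \<and> (\<forall>i\<in>voters P. sep_edge P a b i (\<pi> i))"
  proof (cases "b = a")
    case True
    then show ?thesis
      by (intro exI[of _ id]) (auto simp: sep_edge_def weakly_prefers_def)
  next
    case False
    define A where "A = {i \<in> voters P. prefers P i a b}"
    have "finite (voters P)" and "A \<subseteq> voters P"
      by (auto simp: voters_def A_def)
    moreover have "card (voters P - A) \<le> card A"
      using assms False \<open>A \<subseteq> voters P\<close>
      by (auto simp: condorcet_winner_def A_def card_Diff_subset voters_def)
    ultimately obtain \<pi> where \<pi>: "bij_betw \<pi> (voters P) (voters P)"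
        and into_A: "\<forall>i\<in>voters P - A. \<pi> i \<in> A"
      using exists_permutation_moving_complement_into by blast
    \<comment> \<open>an edge (i, j) of G(a, b) is witnessed by c = b if i \<in> A and by c = a if j \<in> A\<close>
    have "sep_edge P a b i (\<pi> i)" if "i \<in> voters P" for i
      using that into_A unfolding sep_edge_def weakly_prefers_def A_def by blast
    with \<pi> show ?thesis by blast
  qed
qed

definition hard_profile :: "real \<Rightarrow> real \<Rightarrow> 'c::finite list list \<Rightarrow> bool" where
  "hard_profile \<alpha> B P \<longleftrightarrow> profile P \<and> (\<exists>a. condorcet_winner P a) \<and>
     (\<forall>w. condorcet_winner P w \<longrightarrow> costly \<alpha> B P w)"

lemma hard_profile_mono: "hard_profile \<alpha> B P \<Longrightarrow> B' \<le> B \<Longrightarrow> hard_profile \<alpha> B' P"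
  unfolding hard_profile_def using costly_mono by blast

lemma distortion_ge_if_hard_profile:
  fixes P :: "'c::finite list list"
  assumes "hard_profile \<alpha> B P"
  shows "(\<forall>f :: 'c list list \<Rightarrow> 'c. condorcet_consistent f \<longrightarrow> ereal B \<le> distortion \<alpha> (\<lambda>P. {f P}))
    \<and> ereal B \<le> distortion \<alpha> (matching_uncovered_set :: 'c list list \<Rightarrow> 'c set)"
proof (intro conjI allI impI)
  obtain a where a: "condorcet_winner P a" and "profile P"
    and costly: "\<And>w. condorcet_winner P w \<Longrightarrow> costly \<alpha> B P w"
    using assms unfolding hard_profile_def by blast
  show "ereal B \<le> distortion \<alpha> (\<lambda>P. {f P})" if "condorcet_consistent f" for f :: "'c list list \<Rightarrow> 'c"
    using that \<open>profile P\<close> a costly distortion_ge_if_costly[of P \<alpha> B "f P" "\<lambda>P. {f P}"]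
    unfolding condorcet_consistent_def by blast
  show "ereal B \<le> distortion \<alpha> (matching_uncovered_set :: 'c list list \<Rightarrow> 'c set)"
    using distortion_ge_if_costly[OF \<open>profile P\<close> costly[OF a]]
      condorcet_winner_in_matching_uncovered_set[OF a] .
qed

definition lower_bound_profile :: "'c \<Rightarrow> 'c \<Rightarrow> 'c list \<Rightarrow> 'c list list" where
  "lower_bound_profile w x os =
     map (\<lambda>c. c # w # x # remove1 c os) os @ replicate (length os - 2) (x # os @ [w])"

locale lower_bound_instance =
  fixes w x :: "'c::finite" and os :: "'c list"
  assumes distinct_candidates: "distinct (w # x # os)"
    and all_candidates: "set (w # x # os) = UNIV"
    and three_le_length: "3 \<le> length os"
begin

abbreviation P :: "'c list list" where
  "P \<equiv> lower_bound_profile w x os"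

lemma length_P: "length P = 2 * length os - 2"
  using three_le_length by (simp add: lower_bound_profile_def)

lemma profile_P: "profile P"
proof -
  have "ranking (c # w # x # remove1 c os)" if "c \<in> set os" for c
    using that distinct_candidates all_candidates by (auto simp: ranking_def)
  moreover have "ranking (x # os @ [w])"
    using distinct_candidates all_candidates by (auto simp: ranking_def)
  ultimately show ?thesis
    by (auto simp: profile_def lower_bound_profile_def)
qed

lemma length_filter_P:
  "length (filter (\<lambda>r. ranks_above r a b) P) =
     length (filter (\<lambda>c. ranks_above (c # w # x # remove1 c os) a b) os)
     + (if ranks_above (x # os @ [w]) a b then length os - 2 else 0)"
  by (simp add: lower_bound_profile_def filter_map comp_def del: ranks_above.simps)

lemma count_w_over: "b \<noteq> w \<Longrightarrow> length os - 1 \<le> length (filter (\<lambda>r. ranks_above r w b) P)"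
proof -
  assume "b \<noteq> w"
  then have "filter (\<lambda>c. ranks_above (c # w # x # remove1 c os) w b) os = removeAll b os"
    using distinct_candidates all_candidates
    by (auto simp: removeAll_filter_not_eq intro!: filter_cong dest: ranks_above_in_set)
  moreover have "length (removeAll b os) \<ge> length os - 1"
    using distinct_candidates by (simp add: distinct_remove1_removeAll[symmetric] length_remove1)
  ultimately show ?thesis
    unfolding length_filter_P by (simp add: trans_le_add1 del: ranks_above.simps)
qed

lemma count_x_over_w: "length (filter (\<lambda>r. ranks_above r x w) P) = length os - 2"
proof -
  have "filter (\<lambda>c. ranks_above (c # w # x # remove1 c os) x w) os = []"
    using distinct_candidates by (auto simp: filter_empty_conv dest: ranks_above_in_set)
  then show ?thesis
    unfolding length_filter_P by simp
qed

lemma count_over_x: "y \<in> set os \<Longrightarrow> length (filter (\<lambda>r. ranks_above r y x) P) = 1"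
proof -
  assume "y \<in> set os"
  then have "filter (\<lambda>c. ranks_above (c # w # x # remove1 c os) y x) os = filter (\<lambda>c. c = y) os"
    using distinct_candidates by (auto intro!: filter_cong dest: ranks_above_in_set)
  moreover have "length (filter (\<lambda>c. c = y) os) = 1"
  proof -
    have "{c. c = y} \<inter> set os = {y}"
      using \<open>y \<in> set os\<close> by auto
    then show ?thesis
      using distinct_candidates by (simp add: distinct_length_filter)
  qed
  moreover have "\<not> ranks_above (x # os @ [w]) y x"
    using distinct_candidates \<open>y \<in> set os\<close> by (auto dest: ranks_above_in_set)
  ultimately show ?thesis
    unfolding length_filter_P by presburger
qed

lemma condorcet_winner_w: "condorcet_winner P w"
  unfolding condorcet_winner_iff_length_filter
  using count_w_over length_P three_le_length by fastforce

lemma condorcet_winner_unique: "condorcet_winner P y \<Longrightarrow> y = w"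
proof (rule ccontr)
  assume winner: "condorcet_winner P y" and "y \<noteq> w"
  then consider "y = x" | "y \<in> set os"
    using all_candidates by auto
  then show False
  proof cases
    case 1
    then show False
      using winner distinct_candidates three_le_length count_x_over_w length_P
      unfolding condorcet_winner_iff_length_filter by force
  next
    case 2
    then show False
      using winner distinct_candidates three_le_length count_over_x[of y] length_P
      unfolding condorcet_winner_iff_length_filter by force
  qed
qed

definition \<delta> :: "'c \<Rightarrow> 'c \<Rightarrow> real" where
  "\<delta> p q = (if p = q then 0 else if (p \<in> {w, x}) = (q \<in> {w, x}) then 2 else 1)"

lemma \<delta>_self: "\<delta> p p = 0"
  by (simp add: \<delta>_def)

lemma \<delta>_between_1_2: "p \<noteq> q \<Longrightarrow> 1 \<le> \<delta> p q \<and> \<delta> p q \<le> 2"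
  by (simp add: \<delta>_def)

lemma \<delta>_nonneg: "0 \<le> \<delta> p q"
  by (simp add: \<delta>_def)

lemma \<delta>_commute: "\<delta> p q = \<delta> q p"
  by (auto simp: \<delta>_def)

lemma sum_\<delta>_to_w_or_x:
  assumes "p \<in> {w, x}"
  shows "(\<Sum>c\<leftarrow>os. \<delta> c p) = real (length os)"
proof -
  have "map (\<lambda>c. \<delta> c p) os = replicate (length os) 1"
    using assms distinct_candidates by (intro map_eq_replicate_if_const) (auto simp: \<delta>_def)
  then show ?thesis
    by (simp add: sum_list_replicate)
qed

lemma sorted_\<delta>_along_rankings: "r \<in> set P \<Longrightarrow> sorted (map (\<delta> (hd r)) r)"
proof (cases "r = x # os @ [w]")
  case True
  have "map (\<delta> x) os = replicate (length os) 1"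
    using distinct_candidates by (intro map_eq_replicate_if_const) (auto simp: \<delta>_def)
  then show ?thesis
    using True distinct_candidates by (auto simp: \<delta>_def sorted_append)
next
  case False
  assume "r \<in> set P"
  with False obtain c where c: "c \<in> set os" and r: "r = c # w # x # remove1 c os"
    by (auto simp: lower_bound_profile_def)
  have "map (\<delta> c) (remove1 c os) = replicate (length (remove1 c os)) 2"
    using distinct_candidates c by (intro map_eq_replicate_if_const) (auto simp: \<delta>_def)
  then show ?thesis
    using r c distinct_candidates by (auto simp: \<delta>_def)
qed

lemma SC_\<delta>:
  assumes "\<And>i c. i < length P \<Longrightarrow> d (Inl i) (Inr c) = \<delta> (hd (P ! i)) c"
  shows "SC P d c = (\<Sum>c'\<leftarrow>os. \<delta> c' c) + (real (length os) - 2) * \<delta> x c"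
proof -
  have "SC P d c = (\<Sum>r\<leftarrow>P. \<delta> (hd r) c)"
    using assms by (rule SC_eq_sum_list)
  also have "\<dots> = (\<Sum>c'\<leftarrow>os. \<delta> c' c) + (real (length os) - 2) * \<delta> x c"
    using three_le_length by (simp add: lower_bound_profile_def comp_def sum_list_replicate)
  finally show ?thesis .
qed

lemma costly_w:
  assumes "0 \<le> \<alpha>"
  shows "costly \<alpha> (3 - 4 / real (length os)) P w"
proof -
  define loc :: "nat + 'c \<Rightarrow> 'c" where "loc = case_sum (\<lambda>i. hd (P ! i)) id"
  define d where "d u v = \<delta> (loc u) (loc v)" for u v
  have voter_cost: "d (Inl i) (Inr c) = \<delta> (hd (P ! i)) c" for i c
    by (simp add: d_def loc_def)
  have "distance_function P d"
    unfolding d_def[abs_def] using distance_function_pullback \<delta>_self \<delta>_commute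
      triangle_if_distances_in_1_2[of \<delta>, OF \<delta>_self \<delta>_between_1_2] by blast
  moreover have "consistent P d"
    by (rule consistent_if_sorted[where g = "\<lambda>r. \<delta> (hd r)", OF voter_cost sorted_\<delta>_along_rankings])
  moreover have "decisive \<alpha> P d"
    by (rule decisive_if_top_close[where g = "\<lambda>r. \<delta> (hd r)", OF voter_cost])
      (simp add: assms \<delta>_self \<delta>_nonneg)
  moreover have "0 < SC P d c" for c
  proof -
    have "0 \<le> (\<Sum>c'\<leftarrow>os. \<delta> c' c)"
      by (intro sum_list_nonneg) (auto simp: \<delta>_nonneg)
    moreover have "0 < (real (length os) - 2) * \<delta> x c" if "c \<noteq> x"
      using three_le_length \<delta>_between_1_2[OF that[symmetric]] by simp
    moreover have "(\<Sum>c'\<leftarrow>os. \<delta> c' x) = real (length os)"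
      by (simp add: sum_\<delta>_to_w_or_x)
    ultimately show ?thesis
      using three_le_length by (cases "c = x") (auto simp: SC_\<delta>[OF voter_cost] \<delta>_self)
  qed
  moreover have "3 - 4 / real (length os) = SC P d w / SC P d x"
  proof -
    have "\<delta> x w = 2"
      using distinct_candidates by (auto simp: \<delta>_def)
    then have SC_w: "SC P d w = 3 * real (length os) - 4" and SC_x: "SC P d x = real (length os)"
      by (simp_all add: SC_\<delta>[OF voter_cost] sum_\<delta>_to_w_or_x \<delta>_self)
    show ?thesis
      unfolding SC_w SC_x using three_le_length by (auto simp: diff_divide_distrib)
  qed
  ultimately show ?thesis
    by (intro costlyI) auto
qed

lemma hard_profile_P: "0 \<le> \<alpha> \<Longrightarrow> hard_profile \<alpha> (3 - 4 / real (length os)) P"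
  unfolding hard_profile_def
  using profile_P condorcet_winner_w condorcet_winner_unique costly_w by blast

end

lemma costly_two_voter:
  fixes w x :: "'c::finite"
  assumes distinct_candidates: "distinct (w # x # os)"
    and all_candidates: "set (w # x # os) = UNIV"
    and "0 \<le> \<alpha>" and "\<alpha> \<le> 1"
    and P: "P = [w # x # os, x # w # os] \<or> P = [x # w # os, w # x # os]"
  shows "costly \<alpha> (1 + 2 * \<alpha>) P w"
proof -
  define voter_pos :: "'c list \<Rightarrow> real" where
    "voter_pos r = (if hd r = w then \<alpha> else 1 + \<alpha>)" for r
  define cand_pos :: "'c \<Rightarrow> real" where
    "cand_pos c = (if c = w then 0 else if c = x then 1 + \<alpha> else 4)" for c
  define loc :: "nat + 'c \<Rightarrow> real" where "loc = case_sum (voter_pos \<circ> (!) P) cand_pos"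
  define d where "d u v = dist (loc u) (loc v)" for u v
  define g where "g r c = \<bar>voter_pos r - cand_pos c\<bar>" for r c
  have voter_cost: "d (Inl i) (Inr c) = g (P ! i) c" for i c
    by (simp add: d_def loc_def g_def dist_real_def)
  have set_P: "set P = {w # x # os, x # w # os}"
    using P by auto
  have cand_pos_os: "cand_pos c = 4" if "c \<in> set os" for c
    using that distinct_candidates by (auto simp: cand_pos_def)
  have "distance_function P d"
    unfolding d_def[abs_def]
    by (rule distance_function_pullback) (auto intro: dist_triangle dist_commute)
  moreover have "consistent P d"
  proof (rule consistent_if_sorted[where g = g, OF voter_cost])
    fix r assume "r \<in> set P"
    moreover have "map (g r) os = replicate (length os) \<bar>voter_pos r - 4\<bar>" for r
      using cand_pos_os by (intro map_eq_replicate_if_const) (simp add: g_def)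
    ultimately show "sorted (map (g r) r)"
      using assms distinct_candidates unfolding set_P
      by (auto simp: g_def voter_pos_def cand_pos_def)
  qed
  moreover have "decisive \<alpha> P d"
  proof (rule decisive_if_top_close[where g = g, OF voter_cost])
    fix r c assume "r \<in> set P" and c: "c \<noteq> hd r"
    then consider "r = w # x # os" | "r = x # w # os"
      unfolding set_P by blast
    then show "g r (hd r) \<le> \<alpha> * g r c"
    proof cases
      case 1
      have "c = x \<or> c \<in> set os"
        using c all_candidates 1 by auto
      then have "1 \<le> g r c"
        using 1 assms distinct_candidates cand_pos_os
        by (auto simp: g_def voter_pos_def cand_pos_def)
      then show ?thesis
        using 1 assms mult_left_mono[of 1 "g r c" \<alpha>] by (simp add: g_def voter_pos_def cand_pos_def)
    next
      case 2
      then show ?thesis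
        using assms distinct_candidates by (auto simp: g_def voter_pos_def cand_pos_def)
    qed
  qed
  moreover have SC: "SC P d c = g (w # x # os) c + g (x # w # os) c" for c
    using P by (auto simp: SC_eq_sum_list[where g = g, OF voter_cost])
  moreover have "0 < SC P d c" for c
    using assms distinct_candidates all_candidates unfolding SC
    by (auto simp: g_def voter_pos_def cand_pos_def)
  moreover have "1 + 2 * \<alpha> = SC P d w / SC P d x"
    using assms distinct_candidates unfolding SC by (auto simp: g_def voter_pos_def cand_pos_def)
  ultimately show ?thesis
    by (intro costlyI) auto
qed

lemma hard_profile_two_voter:
  fixes w x :: "'c::finite"
  assumes distinct_candidates: "distinct (w # x # os)"
    and all_candidates: "set (w # x # os) = UNIV"
    and "0 \<le> \<alpha>" and "\<alpha> \<le> 1"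
  shows "hard_profile \<alpha> (1 + 2 * \<alpha>) [w # x # os, x # w # os]"
proof -
  let ?P = "[w # x # os, x # w # os]"
  have "profile ?P"
    using distinct_candidates all_candidates by (auto simp: profile_def ranking_def)
  moreover have "condorcet_winner ?P w"
    using all_candidates unfolding condorcet_winner_iff_length_filter by auto
  moreover have "costly \<alpha> (1 + 2 * \<alpha>) ?P y" if "condorcet_winner ?P y" for y
  proof -
    have "y \<notin> set os"
    proof
      assume "y \<in> set os"
      then have "filter (\<lambda>r. ranks_above r y w) ?P = []"
        using distinct_candidates by (auto dest: ranks_above_in_set)
      then show False
        using that \<open>y \<in> set os\<close> distinct_candidates
        unfolding condorcet_winner_iff_length_filter by force
    qed
    then consider "y = w" | "y = x"
      using all_candidates by auto
    then show ?thesis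
    proof cases
      case 1
      then show ?thesis
        using costly_two_voter[OF distinct_candidates all_candidates assms(3,4)] by blast
    next
      case 2
      have "distinct (x # w # os)" and "set (x # w # os) = UNIV"
        using distinct_candidates all_candidates by auto
      then show ?thesis
        using costly_two_voter[of x w os \<alpha> ?P] assms(3,4) 2 by blast
    qed
  qed
  ultimately show ?thesis
    unfolding hard_profile_def by blast
qed

lemma distortion_bound_le_three_minus:
  fixes m :: nat and \<alpha> :: real
  assumes "5 \<le> m" and "0 \<le> \<alpha>" and "\<alpha> \<le> 1"
  shows "3 - 4 * (3 + \<alpha>) / (real m + 2 + real m * \<alpha>) \<le> 3 - 4 / (real m - 2)"
proof -
  have "real m + 2 + real m * \<alpha> \<le> (3 + \<alpha>) * (real m - 2)"
    using assms by (simp add: algebra_simps)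
  then have "4 * (3 + \<alpha>) / ((3 + \<alpha>) * (real m - 2)) \<le> 4 * (3 + \<alpha>) / (real m + 2 + real m * \<alpha>)"
    using assms by (intro divide_left_mono) (auto intro!: mult_pos_pos add_pos_nonneg)
  moreover have "4 * (3 + \<alpha>) / ((3 + \<alpha>) * (real m - 2)) = 4 / (real m - 2)"
    using assms by (simp only: mult.commute[of 4] mult_divide_mult_cancel_left)
  ultimately show ?thesis
    by linarith
qed

lemma distortion_bound_le_one_plus:
  fixes m :: nat and \<alpha> :: real
  assumes "m \<le> 4" and "0 \<le> \<alpha>" and "\<alpha> \<le> 1"
  shows "3 - 4 * (3 + \<alpha>) / (real m + 2 + real m * \<alpha>) \<le> 1 + 2 * \<alpha>"
proof -
  have "real m * (1 + \<alpha>) \<le> 4 * (1 + \<alpha>)"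
    using assms by (intro mult_right_mono) auto
  then have "(2 - 2 * \<alpha>) * (real m + 2 + real m * \<alpha>) \<le> (2 - 2 * \<alpha>) * (6 + 4 * \<alpha>)"
    using assms by (intro mult_left_mono) (auto simp: algebra_simps)
  also have "\<dots> \<le> 4 * (3 + \<alpha>)"
    using assms by (simp add: algebra_simps)
  finally have "2 - 2 * \<alpha> \<le> 4 * (3 + \<alpha>) / (real m + 2 + real m * \<alpha>)"
    using assms by (simp add: pos_le_divide_eq add_pos_nonneg)
  then show ?thesis
    by linarith
qed

theorem proposition3:
  fixes m :: nat and \<alpha> :: real
  assumes "card (UNIV :: 'c::finite set) = m" and "m \<ge> 2" and "0 \<le> \<alpha>" and "\<alpha> \<le> 1"
  shows "(\<forall>f :: 'c list list \<Rightarrow> 'c. condorcet_consistent f \<longrightarrow>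
            ereal (3 - 4 * (3 + \<alpha>) / (real m + 2 + real m * \<alpha>)) \<le> distortion \<alpha> (\<lambda>P. {f P}))
       \<and> ereal (3 - 4 * (3 + \<alpha>) / (real m + 2 + real m * \<alpha>))
            \<le> distortion \<alpha> (matching_uncovered_set :: 'c list list \<Rightarrow> 'c set)"
proof -
  obtain w x :: 'c and os where distinct_candidates: "distinct (w # x # os)"
    and all_candidates: "set (w # x # os) = UNIV" and length: "length os = m - 2"
    using enumerate_finite_UNIV[OF assms(1,2)] .
  have "\<exists>P :: 'c list list. hard_profile \<alpha> (3 - 4 * (3 + \<alpha>) / (real m + 2 + real m * \<alpha>)) P"
  proof (cases "5 \<le> m")
    case True
    interpret lower_bound_instance w x os
      using distinct_candidates all_candidates length True by unfold_locales auto
    have "real (length os) = real m - 2"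
      using length True by simp
    then have "hard_profile \<alpha> (3 - 4 / (real m - 2)) (lower_bound_profile w x os)"
      using hard_profile_P[OF assms(3)] by simp
    then show ?thesis
      using distortion_bound_le_three_minus[OF True assms(3,4)] hard_profile_mono by blast
  next
    case False
    then have "3 - 4 * (3 + \<alpha>) / (real m + 2 + real m * \<alpha>) \<le> 1 + 2 * \<alpha>"
      using distortion_bound_le_one_plus assms(3,4) by simp
    then show ?thesis
      using hard_profile_two_voter[OF distinct_candidates all_candidates assms(3,4)] hard_profile_mono
      by blast
  qed
  then show ?thesis
    using distortion_ge_if_hard_profile by blast
qed

end
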